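(* Let $\mathcal{G}$ be a connected undirected graph with $n$ nodes and $m$ edges and incidence matrix $B\in\mathbb{R}^{n\times m}$, let $p\ge 1$, $E=\begin{bmatrix} I_{p}\\ \mathbf{0}_{(n-p)\times p}\end{bmatrix}$, $d\in\mathbb{R}^n$, $Q=\operatorname{diag}(q_1,\dots,q_p)$ with all $q_i>0$, $r\in\mathbb{R}^p$, $s\in\mathbb{R}$, and $C(u)=\frac12 u^TQu+r^Tu+s$. Consider the optimization problem $$\min_{u\in\mathbb{R}^p,\ \lambda\in\mathbb{R}^m} C(u)\quad\text{subject to}\quad \mathbf{0}=-B\lambda+Eu-d.$$ Its solution (in the variable $u$) is given by $\overline u=Q^{-1}(\kappa-r)$, where $$\kappa=E^T\frac{\mathbb{1}_n\mathbb{1}_n^T}{\mathbb{1}_p^TQ^{-1}\mathbb{1}_p}\,(d+EQ^{-1}r).$$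
   Context: $\mathbb{1}_k$ denotes the all-ones vector of length $k$. The incidence matrix $B=(b_{ik})$ is obtained by arbitrarily orienting each edge and setting $b_{ik}=+1$ if node $i$ is the positive end of edge $k$, $-1$ if it is the negative end, and $0$ otherwise. *)

theory Defs
  imports "Jordan_Normal_Form.Matrix"
begin

text \<open>An undirected graph on nodes 0..n-1 with m edges; edge k has endpoints
  ends k = (a,b), which also fixes an (arbitrary) orientation: a is the positive end,
  b the negative end.\<close>

definition simple_graph :: "nat \<Rightarrow> nat \<Rightarrow> (nat \<Rightarrow> nat \<times> nat) \<Rightarrow> bool" where
  "simple_graph n m ends \<longleftrightarrow>
     (\<forall>k<m. fst (ends k) < n \<and> snd (ends k) < n \<and> fst (ends k) \<noteq> snd (ends k)) \<and>
     (\<forall>k<m. \<forall>l<m. k \<noteq> l \<longrightarrow> {fst (ends k), snd (ends k)} \<noteq> {fst (ends l), snd (ends l)})"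

definition adj_rel :: "nat \<Rightarrow> (nat \<Rightarrow> nat \<times> nat) \<Rightarrow> (nat \<times> nat) set" where
  "adj_rel m ends = {(a, b). \<exists>k<m. ends k = (a, b) \<or> ends k = (b, a)}"

definition connected_graph :: "nat \<Rightarrow> nat \<Rightarrow> (nat \<Rightarrow> nat \<times> nat) \<Rightarrow> bool" where
  "connected_graph n m ends \<longleftrightarrow> n \<ge> 1 \<and>
     (\<forall>i<n. \<forall>j<n. (i, j) \<in> (adj_rel m ends)\<^sup>*)"

definition incidence_mat :: "nat \<Rightarrow> nat \<Rightarrow> (nat \<Rightarrow> nat \<times> nat) \<Rightarrow> real mat" where
  "incidence_mat n m ends = mat n m (\<lambda>(i, k).
      if i = fst (ends k) then 1 else if i = snd (ends k) then -1 else 0)"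

definition ones_vec :: "nat \<Rightarrow> real vec" where
  "ones_vec k = vec k (\<lambda>_. 1)"

definition E_mat :: "nat \<Rightarrow> nat \<Rightarrow> real mat" where
  "E_mat n p = (1\<^sub>m p) @\<^sub>r (0\<^sub>m (n - p) p)"

definition cost :: "real mat \<Rightarrow> real vec \<Rightarrow> real \<Rightarrow> real vec \<Rightarrow> real" where
  "cost Q r s u = 1/2 * (u \<bullet> (Q *\<^sub>v u)) + r \<bullet> u + s"

definition feasible :: "real mat \<Rightarrow> real mat \<Rightarrow> real vec \<Rightarrow> real vec \<Rightarrow> real vec \<Rightarrow> bool" where
  "feasible B E d u lam \<longleftrightarrow> 0\<^sub>v (dim_row B) = - (B *\<^sub>v lam) + E *\<^sub>v u - d"

definition kappa :: "nat \<Rightarrow> nat \<Rightarrow> real mat \<Rightarrow> real vec \<Rightarrow> real vec \<Rightarrow> real vec" where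
  "kappa n p Qinv d r = transpose_mat (E_mat n p) *\<^sub>v
      ((1 / (ones_vec p \<bullet> (Qinv *\<^sub>v ones_vec p))) \<cdot>\<^sub>m mat n n (\<lambda>_. 1)
        *\<^sub>v (d + E_mat n p *\<^sub>v (Qinv *\<^sub>v r)))"

end

theory Submission imports Defs begin

text \<open>Every column of the incidence matrix is a difference of two unit vectors, so its
  range lies in the hyperplane of zero-sum vectors; along a path from node i to node 0
  the columns add up to e_i - e_0, so for a connected graph the range is the whole
  hyperplane. Hence u is feasible iff its entries sum to those of d. On this hyperplane
  a point ubar satisfying the Lagrange condition q_i ubar_i + r_i = mu has
  C(u) = C(ubar) + sum_i q_i/2 (u_i - ubar_i)^2, so it is the unique minimiser; the
  formula for kappa is exactly mu times the all-ones vector, with mu fixed by the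
  constraint.\<close>

definition mat_image :: "'a :: semiring_0 mat \<Rightarrow> 'a vec set" where
  "mat_image A = (\<lambda>x. A *\<^sub>v x) ` carrier_vec (dim_col A)"

lemma mem_mat_image_iff:
  assumes "A \<in> carrier_mat nr nc"
  shows "v \<in> mat_image A \<longleftrightarrow> (\<exists>x\<in>carrier_vec nc. A *\<^sub>v x = v)"
  using assms unfolding mat_image_def by auto

lemma mult_mat_vec_in_mat_image:
  assumes "A \<in> carrier_mat nr nc" and "x \<in> carrier_vec nc"
  shows "A *\<^sub>v x \<in> mat_image A"
  using assms unfolding mat_image_def by auto

lemma mat_image_add:
  assumes A: "A \<in> carrier_mat nr nc" and "v \<in> mat_image A" and "w \<in> mat_image A"
  shows "v + w \<in> mat_image A"
proof -
  from assms obtain x y where x: "x \<in> carrier_vec nc" "v = A *\<^sub>v x"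
    and y: "y \<in> carrier_vec nc" "w = A *\<^sub>v y"
    unfolding mat_image_def by auto
  have "v + w = A *\<^sub>v (x + y)" using mult_add_distrib_mat_vec[OF A x(1) y(1)] x y by simp
  then show ?thesis using A x y unfolding mat_image_def by auto
qed

lemma mat_image_smult:
  fixes A :: "'a :: field mat"
  assumes A: "A \<in> carrier_mat nr nc" and "v \<in> mat_image A"
  shows "c \<cdot>\<^sub>v v \<in> mat_image A"
proof -
  from assms obtain x where x: "x \<in> carrier_vec nc" "v = A *\<^sub>v x"
    unfolding mat_image_def by auto
  have "c \<cdot>\<^sub>v v = A *\<^sub>v (c \<cdot>\<^sub>v x)" using mult_mat_vec[OF A x(1)] x by simp
  then show ?thesis using A x unfolding mat_image_def by auto
qed

lemma zero_in_mat_image: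
  assumes A: "A \<in> carrier_mat nr nc"
  shows "0\<^sub>v nr \<in> mat_image A"
proof -
  have "A *\<^sub>v 0\<^sub>v nc = 0\<^sub>v nr" using A by (intro eq_vecI) (auto simp: scalar_prod_def)
  then show ?thesis using mult_mat_vec_in_mat_image[OF A zero_carrier_vec] by simp
qed

lemma incidence_mat_carrier [simp]: "incidence_mat n m ends \<in> carrier_mat n m"
  unfolding incidence_mat_def by auto

lemma incidence_mat_mult_unit_vec:
  assumes "simple_graph n m ends" and k: "k < m"
  shows "incidence_mat n m ends *\<^sub>v unit_vec m k
       = unit_vec n (fst (ends k)) - unit_vec n (snd (ends k))"
proof (rule eq_vecI)
  fix i assume "i < dim_vec (unit_vec n (fst (ends k)) - unit_vec n (snd (ends k)) :: real vec)"
  then have i: "i < n" by simp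
  have "(incidence_mat n m ends *\<^sub>v unit_vec m k) $ i = incidence_mat n m ends $$ (i, k)"
    using i k by (simp add: incidence_mat_def)
  moreover have "fst (ends k) \<noteq> snd (ends k)" using assms unfolding simple_graph_def by auto
  ultimately show "(incidence_mat n m ends *\<^sub>v unit_vec m k) $ i
      = (unit_vec n (fst (ends k)) - unit_vec n (snd (ends k))) $ i"
    using i k by (auto simp: incidence_mat_def unit_vec_def)
qed (simp add: incidence_mat_def)

lemma sum_incidence_mat_mult_vec:
  assumes g: "simple_graph n m ends" and lam: "lam \<in> carrier_vec m"
  shows "(\<Sum>i<n. (incidence_mat n m ends *\<^sub>v lam) $ i) = 0"
proof -
  let ?b = "\<lambda>i k. if i = fst (ends k) then 1 else if i = snd (ends k) then -1 else (0::real)"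
  have "(\<Sum>i<n. (incidence_mat n m ends *\<^sub>v lam) $ i) = (\<Sum>i<n. \<Sum>k<m. ?b i k * lam $ k)"
    using lam by (auto simp: incidence_mat_def scalar_prod_def lessThan_atLeast0 intro!: sum.cong)
  also have "\<dots> = (\<Sum>k<m. lam $ k * (\<Sum>i<n. ?b i k))"
    by (subst sum.swap) (simp add: sum_distrib_left mult.commute)
  also have "\<dots> = 0"
  proof (rule sum.neutral, intro ballI)
    fix k assume "k \<in> {..<m}"
    then have "fst (ends k) < n" "snd (ends k) < n" "fst (ends k) \<noteq> snd (ends k)"
      using g unfolding simple_graph_def by auto
    then have "(\<Sum>i<n. ?b i k) = 0"
      by (simp add: if_distrib sum.If_cases lessThan_def Collect_conj_eq[symmetric] conj_commute)
    then show "lam $ k * (\<Sum>i<n. ?b i k) = 0" by simp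
  qed
  finally show ?thesis .
qed

lemma unit_vec_diff_in_mat_image_incidence_mat:
  assumes g: "simple_graph n m ends" and "(i, j) \<in> (adj_rel m ends)\<^sup>*"
  shows "unit_vec n i - unit_vec n j \<in> mat_image (incidence_mat n m ends)"
  using assms(2)
proof (induction rule: rtrancl_induct)
  case base
  have "unit_vec n i - unit_vec n i = (0\<^sub>v n :: real vec)" by (intro eq_vecI) auto
  then show ?case using zero_in_mat_image[OF incidence_mat_carrier] by metis
next
  case (step j k)
  let ?B = "incidence_mat n m ends"
  obtain e where e: "e < m" "ends e = (j, k) \<or> ends e = (k, j)"
    using step(2) unfolding adj_rel_def by auto
  have col: "?B *\<^sub>v unit_vec m e \<in> mat_image ?B"
    using e(1) by (intro mult_mat_vec_in_mat_image[OF incidence_mat_carrier]) simp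
  have "unit_vec n j - unit_vec n k \<in> mat_image ?B"
  proof (cases "ends e = (j, k)")
    case True
    then show ?thesis using col incidence_mat_mult_unit_vec[OF g e(1)] by simp
  next
    case False
    then have "ends e = (k, j)" using e by auto
    moreover have "(-1) \<cdot>\<^sub>v (unit_vec n k - unit_vec n j) = (unit_vec n j - unit_vec n k :: real vec)"
      by (intro eq_vecI) auto
    ultimately show ?thesis
      using mat_image_smult[OF incidence_mat_carrier col, of "-1"] incidence_mat_mult_unit_vec[OF g e(1)]
      by simp
  qed
  moreover have "(unit_vec n i - unit_vec n j) + (unit_vec n j - unit_vec n k)
      = (unit_vec n i - unit_vec n k :: real vec)"
    by (intro eq_vecI) auto
  ultimately show ?case using mat_image_add[OF incidence_mat_carrier step(3)] by metis
qed

lemma zero_sum_in_mat_image_incidence_mat: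
  assumes g: "simple_graph n m ends" and c: "connected_graph n m ends"
    and x: "x \<in> carrier_vec n" and x_sum: "(\<Sum>i<n. x $ i) = 0"
  shows "x \<in> mat_image (incidence_mat n m ends)"
proof -
  let ?B = "incidence_mat n m ends"
  have n: "0 < n" using c unfolding connected_graph_def by simp
  define partial where
    "partial k = vec n (\<lambda>j. if j < k then x $ j else 0) - (\<Sum>i<k. x $ i) \<cdot>\<^sub>v unit_vec n 0" for k
  have "partial k \<in> mat_image ?B" if "k \<le> n" for k
    using that
  proof (induction k)
    case 0
    have "partial 0 = 0\<^sub>v n" unfolding partial_def by (intro eq_vecI) auto
    then show ?case using zero_in_mat_image[OF incidence_mat_carrier] by metis
  next
    case (Suc k)
    have "(k, 0) \<in> (adj_rel m ends)\<^sup>*" using c Suc.prems n unfolding connected_graph_def by simp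
    then have "x $ k \<cdot>\<^sub>v (unit_vec n k - unit_vec n 0) \<in> mat_image ?B"
      by (intro mat_image_smult[OF incidence_mat_carrier] unit_vec_diff_in_mat_image_incidence_mat[OF g])
    moreover have "partial k + x $ k \<cdot>\<^sub>v (unit_vec n k - unit_vec n 0) = partial (Suc k)"
    proof (rule eq_vecI)
      fix i assume "i < dim_vec (partial (Suc k))"
      then have i: "i < n" by (simp add: partial_def)
      show "(partial k + x $ k \<cdot>\<^sub>v (unit_vec n k - unit_vec n 0)) $ i = partial (Suc k) $ i"
        using i Suc.prems unfolding partial_def
        by (cases "i = k"; cases "i = 0") (simp_all add: algebra_simps)
    qed (simp add: partial_def)
    ultimately show ?case
      using mat_image_add[OF incidence_mat_carrier] Suc by (metis Suc_leD)
  qed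
  moreover have "partial n = x"
    using x x_sum unfolding partial_def by (intro eq_vecI) auto
  ultimately show ?thesis by (metis order_refl)
qed

lemma mat_image_incidence_mat:
  assumes g: "simple_graph n m ends" and "connected_graph n m ends"
  shows "mat_image (incidence_mat n m ends) = {x \<in> carrier_vec n. (\<Sum>i<n. x $ i) = 0}"
proof (intro equalityI subsetI)
  fix x assume "x \<in> mat_image (incidence_mat n m ends)"
  then obtain lam where "lam \<in> carrier_vec m" "x = incidence_mat n m ends *\<^sub>v lam"
    unfolding mem_mat_image_iff[OF incidence_mat_carrier] by auto
  then show "x \<in> {x \<in> carrier_vec n. (\<Sum>i<n. x $ i) = 0}"
    using sum_incidence_mat_mult_vec[OF g] mult_mat_vec_carrier[OF incidence_mat_carrier] by simp
qed (use assms zero_sum_in_mat_image_incidence_mat in blast)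

lemma E_mat_carrier: "p \<le> n \<Longrightarrow> E_mat n p \<in> carrier_mat n p"
  unfolding E_mat_def by (metis carrier_append_rows le_add_diff_inverse one_carrier_mat zero_carrier_mat)

lemma E_mat_index:
  "p \<le> n \<Longrightarrow> i < n \<Longrightarrow> j < p \<Longrightarrow> E_mat n p $$ (i, j) = (if i = j then 1 else 0)"
  unfolding E_mat_def append_rows_def by (auto simp: index_mat_four_block)

lemma E_mat_mult_vec:
  assumes pn: "p \<le> n" and u: "u \<in> carrier_vec p"
  shows "E_mat n p *\<^sub>v u = vec n (\<lambda>i. if i < p then u $ i else 0)"
proof (rule eq_vecI)
  fix i assume "i < dim_vec (vec n (\<lambda>i. if i < p then u $ i else 0))"
  then have i: "i < n" by simp
  have "(E_mat n p *\<^sub>v u) $ i = (\<Sum>j<p. E_mat n p $$ (i, j) * u $ j)"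
    using E_mat_carrier[OF pn] u i by (auto simp: scalar_prod_def lessThan_atLeast0)
  also have "\<dots> = (\<Sum>j<p. if j = i then u $ j else 0)"
    using E_mat_index[OF pn i] by (intro sum.cong) auto
  finally show "(E_mat n p *\<^sub>v u) $ i = vec n (\<lambda>i. if i < p then u $ i else 0) $ i"
    using i by simp
qed (use E_mat_carrier[OF assms(1)] in auto)

lemma transpose_E_mat_mult_vec:
  assumes pn: "p \<le> n" and y: "y \<in> carrier_vec n"
  shows "transpose_mat (E_mat n p) *\<^sub>v y = vec p (\<lambda>i. y $ i)"
proof (rule eq_vecI)
  fix i assume "i < dim_vec (vec p (\<lambda>i. y $ i))"
  then have i: "i < p" by simp
  have "(transpose_mat (E_mat n p) *\<^sub>v y) $ i = (\<Sum>j<n. E_mat n p $$ (j, i) * y $ j)"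
    using E_mat_carrier[OF pn] y i by (auto simp: scalar_prod_def lessThan_atLeast0)
  also have "\<dots> = (\<Sum>j<n. if j = i then y $ j else 0)"
    using E_mat_index[OF pn _ i] by (intro sum.cong) auto
  finally show "(transpose_mat (E_mat n p) *\<^sub>v y) $ i = vec p (\<lambda>i. y $ i) $ i"
    using i pn by simp
qed (use E_mat_carrier[OF assms(1)] in auto)

lemma sum_E_mat_mult_vec:
  assumes pn: "p \<le> n" and u: "u \<in> carrier_vec p"
  shows "(\<Sum>i<n. (E_mat n p *\<^sub>v u) $ i) = (\<Sum>i<p. u $ i)"
proof -
  have "(\<Sum>i<n. (E_mat n p *\<^sub>v u) $ i) = (\<Sum>i<n. if i < p then u $ i else 0)"
    using E_mat_mult_vec[OF pn u] by simp
  also have "\<dots> = (\<Sum>i<p. u $ i)"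
    using pn by (intro sum.mono_neutral_cong_right) auto
  finally show ?thesis .
qed

lemma mat_diag_mult_vec:
  assumes "u \<in> carrier_vec p"
  shows "mat_diag p f *\<^sub>v u = vec p (\<lambda>i. f i * u $ i)"
proof (rule eq_vecI)
  fix i assume "i < dim_vec (vec p (\<lambda>i. f i * u $ i))"
  then have i: "i < p" by simp
  have "(mat_diag p f *\<^sub>v u) $ i = (\<Sum>j<p. (if i = j then f j else 0) * u $ j)"
    using assms i by (auto simp: mat_diag_def scalar_prod_def lessThan_atLeast0)
  also have "\<dots> = (\<Sum>j<p. if i = j then f j * u $ j else 0)"
    by (intro sum.cong) auto
  finally show "(mat_diag p f *\<^sub>v u) $ i = vec p (\<lambda>i. f i * u $ i) $ i" using i by simp
qed (simp add: mat_diag_def)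

lemma feasible_iff_sum_eq:
  assumes g: "simple_graph n m ends" and c: "connected_graph n m ends" and pn: "p \<le> n"
    and d: "d \<in> carrier_vec n" and u: "u \<in> carrier_vec p"
  shows "(\<exists>lam\<in>carrier_vec m. feasible (incidence_mat n m ends) (E_mat n p) d u lam)
     \<longleftrightarrow> (\<Sum>i<p. u $ i) = (\<Sum>i<n. d $ i)"
proof -
  let ?B = "incidence_mat n m ends" and ?x = "E_mat n p *\<^sub>v u - d"
  have x: "?x \<in> carrier_vec n" using mult_mat_vec_carrier[OF E_mat_carrier[OF pn] u] d by simp
  have "feasible ?B (E_mat n p) d u lam \<longleftrightarrow> ?B *\<^sub>v lam = ?x" if "lam \<in> carrier_vec m" for lam
    using that d mult_mat_vec_carrier[OF incidence_mat_carrier[of n m ends] that]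
      carrier_matD[OF E_mat_carrier[OF pn]]
    unfolding feasible_def by (auto simp: vec_eq_iff)
  then have "(\<exists>lam\<in>carrier_vec m. feasible ?B (E_mat n p) d u lam) \<longleftrightarrow> ?x \<in> mat_image ?B"
    unfolding mem_mat_image_iff[OF incidence_mat_carrier] by auto
  also have "\<dots> \<longleftrightarrow> (\<Sum>i<n. ?x $ i) = 0"
    using mat_image_incidence_mat[OF g c] x by simp
  also have "(\<Sum>i<n. ?x $ i) = (\<Sum>i<p. u $ i) - (\<Sum>i<n. d $ i)"
    using d x sum_E_mat_mult_vec[OF pn u] by (simp add: sum_subtractf)
  finally show ?thesis by simp
qed

lemma cost_mat_diag:
  assumes u: "u \<in> carrier_vec p" and r: "r \<in> carrier_vec p"
  shows "cost (mat_diag p q) r s u = (\<Sum>i<p. q i / 2 * (u $ i)\<^sup>2 + r $ i * u $ i) + s"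
proof -
  have "u \<bullet> (mat_diag p q *\<^sub>v u) = (\<Sum>i<p. q i * (u $ i)\<^sup>2)"
    using u by (simp add: mat_diag_mult_vec scalar_prod_def lessThan_atLeast0 power2_eq_square
        mult.commute mult.left_commute)
  moreover have "r \<bullet> u = (\<Sum>i<p. r $ i * u $ i)"
    using u by (simp add: scalar_prod_def lessThan_atLeast0)
  ultimately show ?thesis
    by (simp add: cost_def sum.distrib sum_distrib_left sum_divide_distrib)
qed

lemma cost_mat_diag_eq_stationary_point:
  assumes u: "u \<in> carrier_vec p" and v: "v \<in> carrier_vec p" and r: "r \<in> carrier_vec p"
    and stationary: "\<forall>i<p. q i * v $ i + r $ i = mu"
    and sum_eq: "(\<Sum>i<p. u $ i) = (\<Sum>i<p. v $ i)"
  shows "cost (mat_diag p q) r s u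
       = cost (mat_diag p q) r s v + (\<Sum>i<p. q i / 2 * (u $ i - v $ i)\<^sup>2)"
proof -
  have "q i / 2 * (u $ i)\<^sup>2 + r $ i * u $ i
      = (q i / 2 * (v $ i)\<^sup>2 + r $ i * v $ i) + q i / 2 * (u $ i - v $ i)\<^sup>2 + mu * (u $ i - v $ i)"
    if "i < p" for i
    using stationary that by (auto simp: power2_eq_square algebra_simps)
  then have "(\<Sum>i<p. q i / 2 * (u $ i)\<^sup>2 + r $ i * u $ i)
      = (\<Sum>i<p. q i / 2 * (v $ i)\<^sup>2 + r $ i * v $ i) + (\<Sum>i<p. q i / 2 * (u $ i - v $ i)\<^sup>2)
        + mu * ((\<Sum>i<p. u $ i) - (\<Sum>i<p. v $ i))"
    by (simp add: sum.distrib sum_subtractf sum_distrib_left right_diff_distrib)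
  then show ?thesis using sum_eq by (simp add: cost_mat_diag[OF u r] cost_mat_diag[OF v r])
qed

lemma stationary_point_minimises_cost_mat_diag:
  assumes "u \<in> carrier_vec p" "v \<in> carrier_vec p" "r \<in> carrier_vec p"
    and "\<forall>i<p. q i * v $ i + r $ i = mu" and "(\<Sum>i<p. u $ i) = (\<Sum>i<p. v $ i)"
    and "\<forall>i<p. q i \<ge> 0"
  shows "cost (mat_diag p q) r s v \<le> cost (mat_diag p q) r s u"
proof -
  have "0 \<le> (\<Sum>i<p. q i / 2 * (u $ i - v $ i)\<^sup>2)" using assms(6) by (intro sum_nonneg) simp
  then show ?thesis using cost_mat_diag_eq_stationary_point[OF assms(1-5)] by simp
qed

lemma stationary_point_unique_minimiser_cost_mat_diag:
  assumes "u \<in> carrier_vec p" "v \<in> carrier_vec p" "r \<in> carrier_vec p"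
    and "\<forall>i<p. q i * v $ i + r $ i = mu" and "(\<Sum>i<p. u $ i) = (\<Sum>i<p. v $ i)"
    and qpos: "\<forall>i<p. q i > 0"
    and le: "cost (mat_diag p q) r s u \<le> cost (mat_diag p q) r s v"
  shows "u = v"
proof -
  have terms_nonneg: "q i / 2 * (u $ i - v $ i)\<^sup>2 \<ge> 0" if "i \<in> {..<p}" for i
    using qpos that by (simp add: less_imp_le)
  have "0 \<le> (\<Sum>i<p. q i / 2 * (u $ i - v $ i)\<^sup>2)"
    by (rule sum_nonneg) (rule terms_nonneg)
  then have "(\<Sum>i<p. q i / 2 * (u $ i - v $ i)\<^sup>2) = 0"
    using cost_mat_diag_eq_stationary_point[OF assms(1-5), of s] le by linarith
  then have "q i / 2 * (u $ i - v $ i)\<^sup>2 = 0" if "i < p" for i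
    using sum_nonneg_0[OF finite_lessThan, where f = "\<lambda>i. q i / 2 * (u $ i - v $ i)\<^sup>2", OF terms_nonneg]
      that by blast
  then have "\<forall>i<p. u $ i = v $ i" using qpos by force
  then show ?thesis using assms(1,2) by (intro eq_vecI) auto
qed

lemma kappa_mat_diag:
  assumes pn: "p \<le> n" and d: "d \<in> carrier_vec n" and r: "r \<in> carrier_vec p"
  shows "kappa n p (mat_diag p f) d r
       = vec p (\<lambda>_. ((\<Sum>i<n. d $ i) + (\<Sum>i<p. f i * r $ i)) / (\<Sum>i<p. f i))"
proof -
  define w where "w = d + E_mat n p *\<^sub>v (mat_diag p f *\<^sub>v r)"
  have fr: "mat_diag p f *\<^sub>v r \<in> carrier_vec p" using mat_diag_mult_vec[OF r] by simp
  have w: "w \<in> carrier_vec n"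
    unfolding w_def using d mult_mat_vec_carrier[OF E_mat_carrier[OF pn] fr] by simp
  have "(\<Sum>i<n. w $ i) = (\<Sum>i<n. d $ i + (E_mat n p *\<^sub>v (mat_diag p f *\<^sub>v r)) $ i)"
    unfolding w_def using d carrier_matD[OF E_mat_carrier[OF pn]] by (intro sum.cong) auto
  also have "\<dots> = (\<Sum>i<n. d $ i) + (\<Sum>i<p. f i * r $ i)"
    using sum_E_mat_mult_vec[OF pn fr] mat_diag_mult_vec[OF r] by (simp add: sum.distrib)
  moreover have "ones_vec p \<bullet> (mat_diag p f *\<^sub>v ones_vec p) = (\<Sum>i<p. f i)"
    by (simp add: ones_vec_def mat_diag_mult_vec scalar_prod_def lessThan_atLeast0)
  moreover have "(c \<cdot>\<^sub>m mat n n (\<lambda>_. 1)) *\<^sub>v w = vec n (\<lambda>_. c * (\<Sum>i<n. w $ i))" for c :: real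
    using w by (auto intro!: eq_vecI simp: scalar_prod_def lessThan_atLeast0 sum_distrib_left)
  ultimately show ?thesis
    unfolding kappa_def w_def[symmetric] using pn by (auto simp: transpose_E_mat_mult_vec)
qed

lemma kappa_gives_stationary_feasible_point:
  assumes pn: "p \<le> n" and p1: "p \<ge> 1" and d: "d \<in> carrier_vec n" and r: "r \<in> carrier_vec p"
    and qpos: "\<forall>i<p. q i > 0"
  defines "v \<equiv> mat_diag p (\<lambda>i. 1 / q i) *\<^sub>v (kappa n p (mat_diag p (\<lambda>i. 1 / q i)) d r - r)"
  obtains mu where "v \<in> carrier_vec p" and "\<forall>i<p. q i * v $ i + r $ i = mu"
    and "(\<Sum>i<p. v $ i) = (\<Sum>i<n. d $ i)"
proof
  define mu where "mu = ((\<Sum>i<n. d $ i) + (\<Sum>i<p. 1 / q i * r $ i)) / (\<Sum>i<p. 1 / q i)"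
  have v_eq: "v = vec p (\<lambda>i. 1 / q i * (mu - r $ i))"
    unfolding v_def kappa_mat_diag[OF pn d r] mu_def[symmetric]
    using r by (auto simp: mat_diag_mult_vec intro!: eq_vecI)
  show "v \<in> carrier_vec p" unfolding v_eq by simp
  show "\<forall>i<p. q i * v $ i + r $ i = mu"
    using qpos unfolding v_eq by force
  have "(\<Sum>i<p. 1 / q i) > 0"
    using p1 qpos by (intro sum_pos) (auto simp: lessThan_empty_iff)
  moreover have "(\<Sum>i<p. v $ i) = mu * (\<Sum>i<p. 1 / q i) - (\<Sum>i<p. 1 / q i * r $ i)"
    unfolding v_eq by (simp add: right_diff_distrib sum_subtractf sum_distrib_left mult.commute)
  ultimately show "(\<Sum>i<p. v $ i) = (\<Sum>i<n. d $ i)"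
    unfolding mu_def by simp
qed

theorem lemma3:
  fixes n m p :: nat and ends :: "nat \<Rightarrow> nat \<times> nat"
    and d :: "real vec" and q :: "nat \<Rightarrow> real" and r :: "real vec" and s :: real
  assumes graph: "simple_graph n m ends" and conn: "connected_graph n m ends"
    and p1: "p \<ge> 1" and pn: "p \<le> n"
    and d: "d \<in> carrier_vec n" and r: "r \<in> carrier_vec p"
    and qpos: "\<forall>i<p. q i > 0"
  defines "B \<equiv> incidence_mat n m ends"
    and "E \<equiv> E_mat n p"
    and "Q \<equiv> mat_diag p q"
    and "ubar \<equiv> mat_diag p (\<lambda>i. 1 / q i) *\<^sub>v (kappa n p (mat_diag p (\<lambda>i. 1 / q i)) d r - r)"
  shows "(\<exists>lam \<in> carrier_vec m. feasible B E d ubar lam)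
       \<and> (\<forall>u \<in> carrier_vec p. \<forall>lam \<in> carrier_vec m.
            feasible B E d u lam \<longrightarrow> cost Q r s ubar \<le> cost Q r s u)
       \<and> (\<forall>u \<in> carrier_vec p. \<forall>lam \<in> carrier_vec m.
            feasible B E d u lam \<and>
            (\<forall>u' \<in> carrier_vec p. \<forall>lam' \<in> carrier_vec m.
               feasible B E d u' lam' \<longrightarrow> cost Q r s u \<le> cost Q r s u')
            \<longrightarrow> u = ubar)"
proof -
  obtain mu where ubar: "ubar \<in> carrier_vec p" and stationary: "\<forall>i<p. q i * ubar $ i + r $ i = mu"
    and ubar_sum: "(\<Sum>i<p. ubar $ i) = (\<Sum>i<n. d $ i)"
    using kappa_gives_stationary_feasible_point[OF pn p1 d r qpos] unfolding ubar_def by blast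
  have feasible_iff: "(\<exists>lam\<in>carrier_vec m. feasible B E d u lam) \<longleftrightarrow> (\<Sum>i<p. u $ i) = (\<Sum>i<p. ubar $ i)"
    if "u \<in> carrier_vec p" for u
    unfolding B_def E_def ubar_sum using feasible_iff_sum_eq[OF graph conn pn d that] .
  show ?thesis
    unfolding Q_def
  proof (intro conjI ballI impI)
    show "\<exists>lam\<in>carrier_vec m. feasible B E d ubar lam" using feasible_iff[OF ubar] by simp
  next
    fix u lam assume "u \<in> carrier_vec p" "lam \<in> carrier_vec m" "feasible B E d u lam"
    then show "cost (mat_diag p q) r s ubar \<le> cost (mat_diag p q) r s u"
      using feasible_iff stationary_point_minimises_cost_mat_diag[OF _ ubar r stationary] qpos
      by (meson less_imp_le)
  next
    fix u lam assume u: "u \<in> carrier_vec p" and "lam \<in> carrier_vec m"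
      and "feasible B E d u lam \<and> (\<forall>u'\<in>carrier_vec p. \<forall>lam'\<in>carrier_vec m.
        feasible B E d u' lam' \<longrightarrow> cost (mat_diag p q) r s u \<le> cost (mat_diag p q) r s u')"
    then show "u = ubar"
      using feasible_iff u feasible_iff[OF ubar] ubar
        stationary_point_unique_minimiser_cost_mat_diag[OF u ubar r stationary _ qpos]
      by meson
  qed
qed

end
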